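(* Consider a prior of type (T1) whose density $g$ is positive and continuous on $\mathbb R$, and let $\theta_0\in\ell_2$. Fix $K>0$. There is a small enough constant $\epsilon>0$ such that, uniformly for $k\in\{2,\dots,\lfloor\epsilon n/\log n\rfloor\}$, $$\epsilon_n(k)^2\asymp\sum_{i=k+1}^\infty\theta_{0,i}^2+\frac{k\log n}{n}.$$ Moreover, if $\theta_0\in\mathcal H_\infty(\beta,L)\cup\mathcal S_\beta(L)$ with $\beta>0$ and $L>0$, then, with $\Lambda_n=\{2,\dots,\lfloor\epsilon n/\log n\rfloor\}$, $$\epsilon_{n,0}\lesssim(n/\log n)^{-\beta/(2\beta+1)},$$ and there exists $\theta_0\in\mathcal H_\infty(\beta,L)\cup\mathcal S_\beta(L)$ for which this bound is also a lower bound, i.e. $\epsilon_{n,0}\asymp(n/\log n)^{-\beta/(2\beta+1)}$.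
   Context: Parameters are sequences $\theta=(\theta_j)_{j\ge1}\in\ell_2$ with norm $\|\theta\|_2=(\sum_j\theta_j^2)^{1/2}$. Prior (T1): the hyper-parameter is the truncation level $\lambda=k\in\{2,3,\dots\}$; given $k$, $\theta_j$, $j\le k$, are i.i.d. with Lebesgue density $g$, and $\theta_j=0$ for $j>k$; $g$ satisfies $\int e^{s_0|x|^{p^*}}g(x)dx<\infty$ for some $s_0>0$, $p^*\ge1$. For fixed $K>0$ and true $\theta_0$, $\epsilon_n(k)$ is defined by $\Pi(\theta:\|\theta-\theta_0\|_2\le K\epsilon_n(k)\,|\,k)=e^{-n\epsilon_n(k)^2}$. For a set $\Lambda_n$ of hyper-parameters and a sequence $m_n\to\infty$ (growing slowly), $\epsilon_{n,0}^2=\inf\{\epsilon_n(k)^2:k\in\Lambda_n,\epsilon_n(k)^2\ge m_n\log n/n\}\vee(m_n\log n/n)$. Classes: $\mathcal H_\infty(\beta,L)=\{\theta_0:\max_ii^{2\beta+1}\theta_{0,i}^2\le L\}$ and $\mathcal S_\beta(L)=\{\theta_0:\sum_ii^{2\beta}\theta_{0,i}^2\le L\}$. $a_n\asymp b_n$ means $a_n\lesssim b_n\lesssim a_n$, with constants independent of $n$ and $k$. *)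

theory Defs
  imports "HOL-Probability.Probability"
begin

text \<open>Sequences theta = (theta_1, theta_2, ...) are represented 0-based:
  the Isabelle function value th j stands for theta_(j+1).\<close>

definition l2seq :: "(nat \<Rightarrow> real) set" where
  "l2seq = {th. summable (\<lambda>j. (th j)\<^sup>2)}"

definition tail_sq :: "(nat \<Rightarrow> real) \<Rightarrow> nat \<Rightarrow> real" where
  "tail_sq th k = (\<Sum>j. (th (j + k))\<^sup>2)"

text \<open>Prior (T1) conditionally on the truncation level k: the first k coordinates are
  i.i.d. with Lebesgue density g, the remaining ones are 0.  Hence
  Pi(||theta - theta0||_2 <= r | k) is the g^k-probability that
  sum_{j<=k} (theta_j - theta0_j)^2 + sum_{j>k} theta0_j^2 <= r^2.\<close>
definition prior_ball :: "(real \<Rightarrow> real) \<Rightarrow> (nat \<Rightarrow> real) \<Rightarrow> nat \<Rightarrow> real \<Rightarrow> real" where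
  "prior_ball g th0 k r =
     measure (PiM {..<k} (\<lambda>_. density lborel (\<lambda>x. ennreal (g x))))
       {x \<in> space (PiM {..<k} (\<lambda>_. density lborel (\<lambda>x. ennreal (g x)))).
          (\<Sum>j<k. (x j - th0 j)\<^sup>2) + tail_sq th0 k \<le> r\<^sup>2}"

definition eps_n :: "(real \<Rightarrow> real) \<Rightarrow> (nat \<Rightarrow> real) \<Rightarrow> real \<Rightarrow> nat \<Rightarrow> nat \<Rightarrow> real" where
  "eps_n g th0 K n k =
     (THE e. e > 0 \<and> prior_ball g th0 k (K * e) = exp (- (real n * e\<^sup>2)))"

definition Lambda_n :: "real \<Rightarrow> nat \<Rightarrow> nat set" where
  "Lambda_n eps n = {2 .. nat \<lfloor>eps * real n / ln (real n)\<rfloor>}"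

text \<open>epsilon_{n,0}^2 (as an extended real: the infimum of the empty set is +infinity).\<close>
definition eps_n0_sq ::
  "(real \<Rightarrow> real) \<Rightarrow> (nat \<Rightarrow> real) \<Rightarrow> real \<Rightarrow> (nat \<Rightarrow> real) \<Rightarrow> nat set \<Rightarrow> nat \<Rightarrow> ereal" where
  "eps_n0_sq g th0 K m Lam n =
     sup (Inf {ereal ((eps_n g th0 K n k)\<^sup>2) | k. k \<in> Lam \<and>
                 (eps_n g th0 K n k)\<^sup>2 \<ge> m n * ln (real n) / real n})
         (ereal (m n * ln (real n) / real n))"

definition H_inf :: "real \<Rightarrow> real \<Rightarrow> (nat \<Rightarrow> real) set" where
  "H_inf \<beta> L = {th. \<forall>j. real (j + 1) powr (2 * \<beta> + 1) * (th j)\<^sup>2 \<le> L}"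

definition S_cls :: "real \<Rightarrow> real \<Rightarrow> (nat \<Rightarrow> real) set" where
  "S_cls \<beta> L = {th. summable (\<lambda>j. real (j + 1) powr (2 * \<beta>) * (th j)\<^sup>2) \<and>
                     (\<Sum>j. real (j + 1) powr (2 * \<beta>) * (th j)\<^sup>2) \<le> L}"

end

theory Submission
  imports Defs "HOL-Real_Asymp.Real_Asymp"
begin

text \<open>
  Given \<open>k\<close>, the prior mass \<open>prior_ball g \<theta>\<^sub>0 k r\<close> is the distribution function at \<open>r\<^sup>2\<close> of
  \<open>S = \<Sum>\<^sub>j\<^sub><\<^sub>k (\<theta>\<^sub>j - \<theta>\<^sub>0\<^sub>,\<^sub>j)\<^sup>2 + tail(k)\<close>, which is continuous for \<open>k \<ge> 1\<close> because spheres are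
  null. Hence \<open>\<epsilon>\<^sub>n(k)\<close> is the unique crossing of the nondecreasing \<open>e \<mapsto> \<Pi>(\<parallel>\<theta> - \<theta>\<^sub>0\<parallel> \<le> K e | k)\<close>
  with the strictly decreasing \<open>e \<mapsto> exp (-n e\<^sup>2)\<close>, and any bound on a prior mass bounds \<open>\<epsilon>\<^sub>n(k)\<close>.

  The density \<open>g\<close> is bounded above and below near the (bounded) coordinates of \<open>\<theta>\<^sub>0\<close>. A box of
  side \<open>(log n / n)\<^sup>1\<^sup>/\<^sup>2\<close> around \<open>\<theta>\<^sub>0\<close> therefore has prior mass at least \<open>n\<^sup>-\<^sup>k\<close>, giving
  \<open>\<epsilon>\<^sub>n(k)\<^sup>2 \<lesssim> tail(k) + k log n / n\<close>. Conversely a Chernoff bound gives mass at most \<open>n\<^sup>-\<^sup>k\<^sup>/\<^sup>1\<^sup>6\<close>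
  to the ball of radius \<open>(k log n / (16 n))\<^sup>1\<^sup>/\<^sup>2\<close>, and balls of radius below \<open>tail(k)\<^sup>1\<^sup>/\<^sup>2\<close> carry
  no prior mass, giving the matching lower bound. Both bounds hold for every \<open>k \<ge> 1\<close> once \<open>n\<close> is large.

  For smooth \<open>\<theta>\<^sub>0\<close> the tail is \<open>O(k\<^sup>-\<^sup>2\<^sup>\<beta>)\<close>, and \<open>k \<asymp> (n / log n)\<^sup>1\<^sup>/\<^sup>(\<^sup>2\<^sup>\<beta>\<^sup>+\<^sup>1\<^sup>)\<close> balances the
  two terms; the sequence \<open>\<theta>\<^sub>0\<^sub>,\<^sub>i\<^sup>2 = L i\<^sup>-\<^sup>(\<^sup>2\<^sup>\<beta>\<^sup>+\<^sup>1\<^sup>)\<close> has tail \<open>\<gtrsim> k\<^sup>-\<^sup>2\<^sup>\<beta>\<close>, so for it no \<open>k\<close>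
  does better.
\<close>

section \<open>Tails of smooth sequences\<close>

lemma sums_tail_sq:
  assumes "summable (\<lambda>j. (th j)\<^sup>2)"
  shows "(\<lambda>j. (th (j + k))\<^sup>2) sums tail_sq th k"
  unfolding tail_sq_def using assms summable_iff_shift[of "\<lambda>j. (th j)\<^sup>2" k]
  by (simp add: summable_sums)

lemma tail_sq_nonneg:
  assumes "summable (\<lambda>j. (th j)\<^sup>2)"
  shows "0 \<le> tail_sq th k"
  unfolding tail_sq_def using sums_summable[OF sums_tail_sq[OF assms]]
  by (intro suminf_nonneg) auto

lemma H_inf_sq_le:
  assumes "th \<in> H_inf \<beta> L"
  shows "(th j)\<^sup>2 \<le> L * real (j + 1) powr (- (2 * \<beta> + 1))"
proof -
  have "real (j + 1) powr (2 * \<beta> + 1) * (th j)\<^sup>2 \<le> L"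
    using assms by (simp add: H_inf_def)
  then have "(th j)\<^sup>2 \<le> L / real (j + 1) powr (2 * \<beta> + 1)"
    by (simp add: pos_le_divide_eq mult.commute)
  then show ?thesis by (simp only: powr_minus divide_inverse)
qed

lemma summable_powr_succ:
  assumes "\<beta> > 0"
  shows "summable (\<lambda>j. real (j + 1) powr (- (2 * \<beta> + 1)))"
proof -
  have "summable (\<lambda>j. real j powr (- (2 * \<beta> + 1)))"
    using assms by (subst summable_real_powr_iff) auto
  then show ?thesis
    using summable_iff_shift[of "\<lambda>j. real j powr (- (2 * \<beta> + 1))" 1] by simp
qed

lemma H_inf_summable:
  assumes "\<beta> > 0" "th \<in> H_inf \<beta> L"
  shows "summable (\<lambda>j. (th j)\<^sup>2)"
  by (rule summable_comparison_test'[OF summable_mult[OF summable_powr_succ[OF assms(1)], of L]])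
    (use H_inf_sq_le[OF assms(2)] in simp)

lemma S_cls_summable:
  assumes "\<beta> > 0" "th \<in> S_cls \<beta> L"
  shows "summable (\<lambda>j. (th j)\<^sup>2)"
proof (rule summable_comparison_test')
  show "summable (\<lambda>j. real (j + 1) powr (2 * \<beta>) * (th j)\<^sup>2)"
    using assms(2) by (simp add: S_cls_def)
  show "norm ((th j)\<^sup>2) \<le> real (j + 1) powr (2 * \<beta>) * (th j)\<^sup>2" for j
    using assms(1) ge_one_powr_ge_zero[of "real (j + 1)" "2 * \<beta>"]
    by (simp add: mult_le_cancel_right1)
qed

lemma powr_neg_diff_ge:
  fixes b x :: real
  assumes b: "b > 0" and x: "x \<ge> 1"
  shows "b * (x + 1) powr (- (b + 1)) \<le> x powr (- b) - (x + 1) powr (- b)"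
proof -
  have "\<exists>z. x < z \<and> z < x + 1 \<and>
      (x + 1) powr (- b) - x powr (- b) = ((x + 1) - x) * ((- b) * z powr (- b - 1))"
  proof (rule MVT2)
    fix y assume "x \<le> y"
    then show "((\<lambda>y. y powr (- b)) has_real_derivative ((- b) * y powr (- b - 1))) (at y)"
      using x by (intro has_real_derivative_powr) simp
  qed simp
  then obtain z where z: "x < z" "z < x + 1"
    "(x + 1) powr (- b) - x powr (- b) = (- b) * z powr (- b - 1)"
    by auto
  have "(x + 1) powr (- (b + 1)) \<le> z powr (- (b + 1))"
    using z x b by (intro powr_mono2') auto
  then have "b * (x + 1) powr (- (b + 1)) \<le> b * z powr (- b - 1)"
    using b by simp
  also have "\<dots> = x powr (- b) - (x + 1) powr (- b)"
    using z(3) by simp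
  finally show ?thesis .
qed

lemma tail_sq_le_of_H_inf:
  assumes b: "\<beta> > 0" and th: "th \<in> H_inf \<beta> L" and k: "k \<ge> 1"
  shows "tail_sq th k \<le> L / (2 * \<beta>) * real k powr (- (2 * \<beta>))"
proof -
  define f where "f j = real (j + k) powr (- (2 * \<beta>))" for j
  have "0 \<le> real (0 + 1) powr (2 * \<beta> + 1) * (th 0)\<^sup>2"
    by simp
  also have "\<dots> \<le> L"
    using th unfolding H_inf_def by blast
  finally have L: "L \<ge> 0" .
  have "f \<longlonglongrightarrow> 0"
    unfolding f_def using b
    by (intro tendsto_neg_powr filterlim_compose[OF filterlim_real_sequentially])
      (auto intro: filterlim_add_const_nat_at_top)
  then have tel: "(\<lambda>j. L / (2 * \<beta>) * (f j - f (Suc j))) sums (L / (2 * \<beta>) * (f 0 - 0))"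
    by (intro sums_mult telescope_sums')
  have "(th (j + k))\<^sup>2 \<le> L / (2 * \<beta>) * (f j - f (Suc j))" for j
  proof -
    have "2 * \<beta> * (real (j + k) + 1) powr (- (2 * \<beta> + 1))
        \<le> real (j + k) powr (- (2 * \<beta>)) - (real (j + k) + 1) powr (- (2 * \<beta>))"
      using powr_neg_diff_ge[of "2 * \<beta>" "real (j + k)"] b k by simp
    then have "2 * \<beta> * real (j + k + 1) powr (- (2 * \<beta> + 1)) \<le> f j - f (Suc j)"
      unfolding f_def by (simp add: add_ac)
    then have "real (j + k + 1) powr (- (2 * \<beta> + 1)) \<le> (f j - f (Suc j)) / (2 * \<beta>)"
      using b by (simp add: pos_le_divide_eq mult.commute)
    then have "L * real (j + k + 1) powr (- (2 * \<beta> + 1)) \<le> L * ((f j - f (Suc j)) / (2 * \<beta>))"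
      using L by (rule mult_left_mono)
    moreover have "(th (j + k))\<^sup>2 \<le> L * real (j + k + 1) powr (- (2 * \<beta> + 1))"
      by (rule H_inf_sq_le[OF th])
    ultimately show ?thesis by simp
  qed
  then have "tail_sq th k \<le> L / (2 * \<beta>) * (f 0 - 0)"
    by (rule sums_le[OF _ sums_tail_sq[OF H_inf_summable[OF b th]] tel])
  then show ?thesis by (simp add: f_def)
qed

lemma tail_sq_le_of_S_cls:
  assumes b: "\<beta> > 0" and th: "th \<in> S_cls \<beta> L" and k: "k \<ge> 1"
  shows "tail_sq th k \<le> L * real k powr (- (2 * \<beta>))"
proof -
  define w where "w j = real (j + 1) powr (2 * \<beta>) * (th j)\<^sup>2" for j
  have w: "summable w" "suminf w \<le> L"
    using th unfolding S_cls_def w_def[abs_def] by auto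
  have "(th (j + k))\<^sup>2 \<le> real k powr (- (2 * \<beta>)) * w (j + k)" for j
  proof -
    have "real k powr (2 * \<beta>) \<le> real (j + k + 1) powr (2 * \<beta>)"
      using b by (intro powr_mono2) auto
    then have "real k powr (2 * \<beta>) * (th (j + k))\<^sup>2 \<le> w (j + k)"
      unfolding w_def by (intro mult_right_mono) (auto simp: add_ac)
    then have "real k powr (- (2 * \<beta>)) * (real k powr (2 * \<beta>) * (th (j + k))\<^sup>2)
        \<le> real k powr (- (2 * \<beta>)) * w (j + k)"
      by (intro mult_left_mono) auto
    moreover have "real k powr (- (2 * \<beta>)) * real k powr (2 * \<beta>) = 1"
      using k by (simp add: powr_add[symmetric])
    ultimately show ?thesis
      by (simp add: mult.assoc[symmetric])
  qed
  moreover have "(\<lambda>j. real k powr (- (2 * \<beta>)) * w (j + k)) sums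
      (real k powr (- (2 * \<beta>)) * (\<Sum>j. w (j + k)))"
    using summable_iff_shift[of w k] w(1) by (intro sums_mult summable_sums) simp
  ultimately have "tail_sq th k \<le> real k powr (- (2 * \<beta>)) * (\<Sum>j. w (j + k))"
    by (rule sums_le[OF _ sums_tail_sq[OF S_cls_summable[OF b th]]])
  also have "(\<Sum>j. w (j + k)) \<le> L"
  proof -
    have "(\<Sum>j. w (j + k)) = suminf w - (\<Sum>j<k. w j)"
      by (rule suminf_minus_initial_segment[OF w(1)])
    moreover have "0 \<le> (\<Sum>j<k. w j)"
      by (simp add: w_def sum_nonneg)
    ultimately show ?thesis using w(2) by linarith
  qed
  then have "real k powr (- (2 * \<beta>)) * (\<Sum>j. w (j + k)) \<le> real k powr (- (2 * \<beta>)) * L"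
    by (intro mult_left_mono) auto
  finally show ?thesis by (simp add: mult.commute)
qed

lemma tail_sq_le_of_smooth:
  assumes "\<beta> > 0" "L > 0" "th \<in> H_inf \<beta> L \<union> S_cls \<beta> L"
  obtains L' where "L' \<ge> 0" "\<And>k. k \<ge> 1 \<Longrightarrow> tail_sq th k \<le> L' * real k powr (- (2 * \<beta>))"
proof (cases "th \<in> H_inf \<beta> L")
  case True
  show ?thesis
    by (rule that[of "L / (2 * \<beta>)"]) (use assms True tail_sq_le_of_H_inf in auto)
next
  case False
  then show ?thesis
    by (intro that[of L]) (use assms tail_sq_le_of_S_cls in auto)
qed

lemma smooth_summable:
  assumes "\<beta> > 0" "th \<in> H_inf \<beta> L \<union> S_cls \<beta> L"
  shows "summable (\<lambda>j. (th j)\<^sup>2)"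
  using assms H_inf_summable S_cls_summable by blast

definition H_inf_extremal :: "real \<Rightarrow> real \<Rightarrow> nat \<Rightarrow> real" where
  "H_inf_extremal \<beta> L j = sqrt (L * real (j + 1) powr (- (2 * \<beta> + 1)))"

lemma H_inf_extremal_sq:
  "L \<ge> 0 \<Longrightarrow> (H_inf_extremal \<beta> L j)\<^sup>2 = L * real (j + 1) powr (- (2 * \<beta> + 1))"
  by (simp add: H_inf_extremal_def)

lemma H_inf_extremal_in_H_inf:
  assumes "L > 0"
  shows "H_inf_extremal \<beta> L \<in> H_inf \<beta> L"
  using assms by (simp add: H_inf_def H_inf_extremal_sq mult.left_commute powr_add[symmetric])

lemma tail_sq_H_inf_extremal_ge:
  assumes b: "\<beta> > 0" and L: "L > 0" and k: "k \<ge> 1"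
  shows "L * 2 powr (- (2 * \<beta> + 1)) * real k powr (- (2 * \<beta>)) \<le> tail_sq (H_inf_extremal \<beta> L) k"
proof -
  let ?th = "H_inf_extremal \<beta> L"
  have "real k * real k powr (- (2 * \<beta> + 1)) = real k powr (- (2 * \<beta>))"
    by (simp add: powr_mult_base)
  then have "L * 2 powr (- (2 * \<beta> + 1)) * real k powr (- (2 * \<beta>))
      = (\<Sum>j<k. L * (2 * real k) powr (- (2 * \<beta> + 1)))"
    by (simp add: powr_mult mult_ac)
  also have "\<dots> \<le> (\<Sum>j<k. (?th (j + k))\<^sup>2)"
  proof (intro sum_mono)
    fix j assume "j \<in> {..<k}"
    then have "(2 * real k) powr (- (2 * \<beta> + 1)) \<le> real (j + k + 1) powr (- (2 * \<beta> + 1))"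
      using b by (intro powr_mono2') auto
    then show "L * (2 * real k) powr (- (2 * \<beta> + 1)) \<le> (?th (j + k))\<^sup>2"
      using L by (simp add: H_inf_extremal_sq add_ac)
  qed
  also have "\<dots> \<le> tail_sq ?th k"
    using sums_tail_sq[OF H_inf_summable[OF b H_inf_extremal_in_H_inf[OF L]], of k]
    unfolding sums_iff tail_sq_def by (intro sum_le_suminf) auto
  finally show ?thesis .
qed

section \<open>The rate \<open>(n / log n)\<^sup>-\<^sup>2\<^sup>\<beta>\<^sup>/\<^sup>(\<^sup>2\<^sup>\<beta>\<^sup>+\<^sup>1\<^sup>)\<close>\<close>

lemma rate_sq_eq:
  fixes Q \<beta> :: real
  assumes Q: "Q > 0" and b: "\<beta> > 0"
  shows "(Q powr (- \<beta> / (2 * \<beta> + 1)))\<^sup>2 = Q powr (1 / (2 * \<beta> + 1)) / Q"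
    and "(Q powr (- \<beta> / (2 * \<beta> + 1)))\<^sup>2 = (Q powr (1 / (2 * \<beta> + 1))) powr (- (2 * \<beta>))"
proof -
  have d: "2 * \<beta> + 1 \<noteq> 0"
    using b by simp
  have "- \<beta> / (2 * \<beta> + 1) + - \<beta> / (2 * \<beta> + 1) = (- (2 * \<beta>)) / (2 * \<beta> + 1)"
    by (simp add: add_divide_distrib[symmetric])
  also have "\<dots> = 1 / (2 * \<beta> + 1) - 1"
    using d by (simp add: field_simps)
  finally have "- \<beta> / (2 * \<beta> + 1) + - \<beta> / (2 * \<beta> + 1) = 1 / (2 * \<beta> + 1) - 1" .
  then have sq: "(Q powr (- \<beta> / (2 * \<beta> + 1)))\<^sup>2 = Q powr (1 / (2 * \<beta> + 1) - 1)"
    by (simp only: power2_eq_square powr_add[symmetric])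
  then show "(Q powr (- \<beta> / (2 * \<beta> + 1)))\<^sup>2 = Q powr (1 / (2 * \<beta> + 1)) / Q"
    using Q by (simp add: powr_diff)
  have "1 / (2 * \<beta> + 1) * (- (2 * \<beta>)) = 1 / (2 * \<beta> + 1) - 1"
    using d by (simp add: field_simps)
  then show "(Q powr (- \<beta> / (2 * \<beta> + 1)))\<^sup>2 = (Q powr (1 / (2 * \<beta> + 1))) powr (- (2 * \<beta>))"
    by (simp only: sq powr_powr)
qed

lemma rate_sq_le_bias_plus_variance:
  fixes Q \<beta> k :: real
  assumes Q: "Q > 0" and b: "\<beta> > 0" and k: "k > 0"
  shows "(Q powr (- \<beta> / (2 * \<beta> + 1)))\<^sup>2 \<le> k powr (- (2 * \<beta>)) + k / Q"
proof (cases "Q powr (1 / (2 * \<beta> + 1)) \<le> k")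
  case True
  then have "Q powr (1 / (2 * \<beta> + 1)) / Q \<le> k / Q"
    using Q by (intro divide_right_mono) auto
  then show ?thesis
    using rate_sq_eq(1)[OF Q b] by (simp add: add_increasing)
next
  case False
  then have "(Q powr (1 / (2 * \<beta> + 1))) powr (- (2 * \<beta>)) \<le> k powr (- (2 * \<beta>))"
    using b k by (intro powr_mono2') auto
  moreover have "0 \<le> k / Q"
    using Q k by simp
  ultimately show ?thesis
    using rate_sq_eq(2)[OF Q b] by linarith
qed

lemma rate_sq_le_tail_plus_variance:
  fixes Q \<beta> k T L :: real
  assumes Q: "Q > 0" and b: "\<beta> > 0" and k: "k > 0" and L: "L > 0"
    and T: "L * k powr (- (2 * \<beta>)) \<le> T"
  shows "min L 1 * (Q powr (- \<beta> / (2 * \<beta> + 1)))\<^sup>2 \<le> T + k / Q"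
proof -
  have "min L 1 * (Q powr (- \<beta> / (2 * \<beta> + 1)))\<^sup>2 \<le> min L 1 * (k powr (- (2 * \<beta>)) + k / Q)"
    using rate_sq_le_bias_plus_variance[OF Q b k] L by (intro mult_left_mono) auto
  moreover have "min L 1 * k powr (- (2 * \<beta>)) \<le> L * k powr (- (2 * \<beta>))"
    by (intro mult_right_mono) auto
  moreover have "min L 1 * (k / Q) \<le> k / Q"
    using Q k L by (intro mult_left_le_one_le) auto
  ultimately show ?thesis
    using T by (simp add: distrib_left)
qed

lemma tail_plus_variance_le_rate_sq:
  fixes Q \<beta> k T L :: real
  assumes Q: "Q > 0" and b: "\<beta> > 0" and L: "L \<ge> 0" and T: "T \<le> L * k powr (- (2 * \<beta>))"
    and k: "Q powr (1 / (2 * \<beta> + 1)) \<le> k" "k \<le> 2 * Q powr (1 / (2 * \<beta> + 1))"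
  shows "T + k / Q \<le> 3 * max L 1 * (Q powr (- \<beta> / (2 * \<beta> + 1)))\<^sup>2"
proof -
  define R where "R = (Q powr (- \<beta> / (2 * \<beta> + 1)))\<^sup>2"
  have "k powr (- (2 * \<beta>)) \<le> (Q powr (1 / (2 * \<beta> + 1))) powr (- (2 * \<beta>))"
    using Q b k by (intro powr_mono2') auto
  then have "L * k powr (- (2 * \<beta>)) \<le> L * R"
    using L rate_sq_eq(2)[OF Q b] by (simp add: R_def mult_left_mono)
  moreover have "L * R \<le> max L 1 * R"
    by (intro mult_right_mono) (auto simp: R_def)
  ultimately have "T \<le> max L 1 * R"
    using T by linarith
  moreover have "k / Q \<le> 2 * R"
    using Q k rate_sq_eq(1)[OF Q b] by (simp add: R_def divide_right_mono)
  moreover have "R \<le> max L 1 * R"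
    using mult_right_mono[of 1 "max L 1" R] by (simp add: R_def)
  ultimately show ?thesis
    by (simp add: R_def)
qed

lemma eventually_balanced_index:
  fixes \<beta> \<epsilon> c :: real and m :: "nat \<Rightarrow> real"
  assumes b: "\<beta> > 0" and \<epsilon>: "\<epsilon> > 0" and c: "c > 0"
    and m_slow: "\<And>\<delta>. \<delta> > 0 \<Longrightarrow> ((\<lambda>n. m n / real n powr \<delta>) \<longlongrightarrow> 0) sequentially"
  defines "x \<equiv> \<lambda>n::nat. (real n / ln (real n)) powr (1 / (2 * \<beta> + 1))"
  shows "eventually (\<lambda>n. 3 \<le> n \<and> 2 \<le> x n \<and> 2 * x n \<le> \<epsilon> * (real n / ln (real n)) \<and>
      m n \<le> c * x n) sequentially"
proof -
  define a where "a = 1 / (2 * \<beta> + 1)"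
  have a: "0 < a" "a < 1"
    using b by (auto simp: a_def)
  have "eventually (\<lambda>n. m n / real n powr (a / 2) < c) sequentially"
    using m_slow[of "a / 2"] a c by (intro order_tendstoD) auto
  moreover have "eventually (\<lambda>n::nat. 3 \<le> n) sequentially"
    by (rule eventually_ge_at_top)
  moreover have "eventually (\<lambda>n::nat. 2 \<le> (real n / ln (real n)) powr a) sequentially"
    using a by real_asymp
  moreover have "eventually (\<lambda>n::nat. 2 * (real n / ln (real n)) powr a \<le> \<epsilon> * (real n / ln (real n)))
      sequentially"
    using a \<epsilon> by real_asymp
  moreover have "eventually (\<lambda>n::nat. real n powr (a / 2) \<le> (real n / ln (real n)) powr a) sequentially"
    using a by real_asymp
  ultimately show ?thesis
  proof eventually_elim
    case (elim n)
    then have "m n < c * real n powr (a / 2)"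
      by (simp add: pos_divide_less_eq)
    also have "\<dots> \<le> c * x n"
      using elim c by (simp add: x_def a_def)
    finally show ?case
      using elim by (simp add: x_def a_def)
  qed
qed

lemma eps_n0_sq_le:
  assumes "k \<in> Lam" "m n * ln (real n) / real n \<le> (eps_n g th0 K n k)\<^sup>2"
    "(eps_n g th0 K n k)\<^sup>2 \<le> B" "m n * ln (real n) / real n \<le> B"
  shows "eps_n0_sq g th0 K m Lam n \<le> ereal B"
proof -
  have "Inf {ereal ((eps_n g th0 K n k)\<^sup>2) | k. k \<in> Lam \<and>
      (eps_n g th0 K n k)\<^sup>2 \<ge> m n * ln (real n) / real n} \<le> ereal ((eps_n g th0 K n k)\<^sup>2)"
    using assms(1,2) by (intro Inf_lower) auto
  then show ?thesis
    using assms(3,4) unfolding eps_n0_sq_def by (auto intro: order_trans)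
qed

lemma eps_n0_sq_ge:
  assumes "\<And>k. k \<in> Lam \<Longrightarrow> B \<le> (eps_n g th0 K n k)\<^sup>2"
  shows "ereal B \<le> eps_n0_sq g th0 K m Lam n"
  unfolding eps_n0_sq_def using assms by (intro le_supI1 Inf_greatest) auto

lemma eps_n0_sq_le_rate_at:
  fixes th0 :: "nat \<Rightarrow> real" and m :: "nat \<Rightarrow> real" and n :: nat and \<beta> :: real
  defines "Q \<equiv> real n / ln (real n)"
  defines "x \<equiv> Q powr (1 / (2 * \<beta> + 1))"
  assumes c: "c > 0" and C: "C > 0"
    and bounds: "\<And>k. k \<ge> 1 \<Longrightarrow>
      c * (tail_sq th0 k + real k * ln (real n) / real n) \<le> (eps_n g th0 K n k)\<^sup>2 \<and>
      (eps_n g th0 K n k)\<^sup>2 \<le> C * (tail_sq th0 k + real k * ln (real n) / real n)"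
    and tail: "\<And>k. k \<ge> 1 \<Longrightarrow> tail_sq th0 k \<le> L * real k powr (- (2 * \<beta>))" and L: "L \<ge> 0"
    and th0: "summable (\<lambda>j. (th0 j)\<^sup>2)" and b: "\<beta> > 0"
    and n: "3 \<le> n" "2 \<le> x" "2 * x \<le> \<epsilon> * Q" "m n \<le> min c 1 * x"
  shows "eps_n0_sq g th0 K m (Lambda_n \<epsilon> n) n \<le> ereal ((3 * C * max L 1 + 1) * (Q powr (- \<beta> / (2 * \<beta> + 1)))\<^sup>2)"
proof -
  define R where "R = (Q powr (- \<beta> / (2 * \<beta> + 1)))\<^sup>2"
  define k where "k = nat \<lceil>x\<rceil>"
  have Q: "Q > 0"
    using n by (simp add: Q_def)
  have "real k = of_int \<lceil>x\<rceil>"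
    using n by (simp add: k_def)
  then have kx: "x \<le> real k" "real k \<le> 2 * x"
    using n le_of_int_ceiling[of x] of_int_ceiling_le_add_one[of x] by linarith+
  have k2: "k \<ge> 2"
    using kx n by linarith
  have thr: "m n * ln (real n) / real n = m n / Q"
    by (simp add: Q_def)
  have E: "c * (tail_sq th0 k + real k / Q) \<le> (eps_n g th0 K n k)\<^sup>2"
    "(eps_n g th0 K n k)\<^sup>2 \<le> C * (tail_sq th0 k + real k / Q)"
    using bounds[of k] k2 by (simp_all add: Q_def)
  have mx: "m n / Q \<le> c * x / Q" "m n / Q \<le> x / Q"
    using n Q by (auto intro!: divide_right_mono intro: order_trans mult_right_mono)
  show ?thesis
    unfolding R_def[symmetric]
  proof (rule eps_n0_sq_le)
    show "k \<in> Lambda_n \<epsilon> n"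
      using kx n k2 by (simp add: Lambda_n_def Q_def le_nat_floor)
    have "x / Q \<le> tail_sq th0 k + real k / Q"
      using divide_right_mono[OF kx(1), of Q] Q tail_sq_nonneg[OF th0, of k] by linarith
    then have "c * x / Q \<le> (eps_n g th0 K n k)\<^sup>2"
      using E(1) mult_left_mono[of _ _ c] c by fastforce
    then show "m n * ln (real n) / real n \<le> (eps_n g th0 K n k)\<^sup>2"
      using mx thr by linarith
    have "(eps_n g th0 K n k)\<^sup>2 \<le> C * (3 * max L 1 * R)"
      using E(2) C tail_plus_variance_le_rate_sq[OF Q b L tail[of k]] kx k2
      by (auto simp: R_def x_def intro: order_trans mult_left_mono)
    moreover have "C * (3 * max L 1 * R) \<le> (3 * C * max L 1 + 1) * R"
      by (simp add: R_def algebra_simps)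
    ultimately show "(eps_n g th0 K n k)\<^sup>2 \<le> (3 * C * max L 1 + 1) * R"
      by linarith
    have "m n / Q \<le> R"
      using mx rate_sq_eq(1)[OF Q b] by (simp add: R_def x_def)
    moreover have "R \<le> (3 * C * max L 1 + 1) * R"
      using C by (simp add: R_def algebra_simps)
    ultimately show "m n * ln (real n) / real n \<le> (3 * C * max L 1 + 1) * R"
      using thr by linarith
  qed
qed

lemma eps_n0_sq_le_rate:
  fixes th0 :: "nat \<Rightarrow> real" and m :: "nat \<Rightarrow> real"
  assumes c: "c > 0" and C: "C > 0"
    and bounds: "\<And>n k. n \<ge> N \<Longrightarrow> k \<ge> 1 \<Longrightarrow>
      c * (tail_sq th0 k + real k * ln (real n) / real n) \<le> (eps_n g th0 K n k)\<^sup>2 \<and>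
      (eps_n g th0 K n k)\<^sup>2 \<le> C * (tail_sq th0 k + real k * ln (real n) / real n)"
    and tail: "\<And>k. k \<ge> 1 \<Longrightarrow> tail_sq th0 k \<le> L * real k powr (- (2 * \<beta>))" and L: "L \<ge> 0"
    and th0: "summable (\<lambda>j. (th0 j)\<^sup>2)" and b: "\<beta> > 0" and \<epsilon>: "\<epsilon> > 0"
    and m_slow: "\<And>\<delta>. \<delta> > 0 \<Longrightarrow> ((\<lambda>n. m n / real n powr \<delta>) \<longlongrightarrow> 0) sequentially"
  shows "\<exists>C' N'. C' > 0 \<and> (\<forall>n \<ge> N'. eps_n0_sq g th0 K m (Lambda_n \<epsilon> n) n
      \<le> ereal (C' * ((real n / ln (real n)) powr (- \<beta> / (2 * \<beta> + 1)))\<^sup>2))"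
proof -
  obtain N' where N': "\<And>n. n \<ge> N' \<Longrightarrow> 3 \<le> n \<and>
      2 \<le> (real n / ln (real n)) powr (1 / (2 * \<beta> + 1)) \<and>
      2 * (real n / ln (real n)) powr (1 / (2 * \<beta> + 1)) \<le> \<epsilon> * (real n / ln (real n)) \<and>
      m n \<le> min c 1 * (real n / ln (real n)) powr (1 / (2 * \<beta> + 1))"
    using eventually_balanced_index[OF b \<epsilon> _ m_slow, of "min c 1"] c
    by (auto simp: eventually_sequentially)
  have "\<forall>n \<ge> max N N'. eps_n0_sq g th0 K m (Lambda_n \<epsilon> n) n
      \<le> ereal ((3 * C * max L 1 + 1) * ((real n / ln (real n)) powr (- \<beta> / (2 * \<beta> + 1)))\<^sup>2)"
    using N' bounds by (intro allI impI eps_n0_sq_le_rate_at[OF c C _ tail L th0 b]) auto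
  moreover have "3 * C * max L 1 + 1 > 0"
    using C by (simp add: add_pos_nonneg)
  ultimately show ?thesis by blast
qed

lemma rate_le_eps_n0_sq:
  fixes th0 :: "nat \<Rightarrow> real" and m :: "nat \<Rightarrow> real"
  assumes c: "c > 0"
    and bound: "\<And>n k. n \<ge> N \<Longrightarrow> k \<ge> 1 \<Longrightarrow>
      c * (tail_sq th0 k + real k * ln (real n) / real n) \<le> (eps_n g th0 K n k)\<^sup>2"
    and tail: "\<And>k. k \<ge> 1 \<Longrightarrow> L * real k powr (- (2 * \<beta>)) \<le> tail_sq th0 k"
    and L: "L > 0" and b: "\<beta> > 0"
  shows "\<exists>c' N'. c' > 0 \<and> (\<forall>n \<ge> N'. ereal (c' * ((real n / ln (real n)) powr (- \<beta> / (2 * \<beta> + 1)))\<^sup>2)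
      \<le> eps_n0_sq g th0 K m (Lambda_n \<epsilon> n) n)"
proof -
  have "ereal (c * min L 1 * ((real n / ln (real n)) powr (- \<beta> / (2 * \<beta> + 1)))\<^sup>2)
      \<le> eps_n0_sq g th0 K m (Lambda_n \<epsilon> n) n" if n: "n \<ge> max N 3" for n
  proof (rule eps_n0_sq_ge)
    fix k assume "k \<in> Lambda_n \<epsilon> n"
    then have k: "k \<ge> 1"
      by (simp add: Lambda_n_def)
    have "min L 1 * ((real n / ln (real n)) powr (- \<beta> / (2 * \<beta> + 1)))\<^sup>2
        \<le> tail_sq th0 k + real k / (real n / ln (real n))"
      using n k L by (intro rate_sq_le_tail_plus_variance[OF _ b _ L tail]) auto
    then have "c * min L 1 * ((real n / ln (real n)) powr (- \<beta> / (2 * \<beta> + 1)))\<^sup>2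
        \<le> c * (tail_sq th0 k + real k * ln (real n) / real n)"
      using c by (simp add: mult.assoc mult_left_mono)
    also have "\<dots> \<le> (eps_n g th0 K n k)\<^sup>2"
      using bound k n by simp
    finally show "c * min L 1 * ((real n / ln (real n)) powr (- \<beta> / (2 * \<beta> + 1)))\<^sup>2
        \<le> (eps_n g th0 K n k)\<^sup>2" .
  qed
  moreover have "c * min L 1 > 0"
    using c L by simp
  ultimately show ?thesis by blast
qed

section \<open>Prior mass of balls around \<open>\<theta>\<^sub>0\<close>\<close>

lemma abs_le_sqrt_suminf_sq:
  fixes a :: "nat \<Rightarrow> real"
  assumes "summable (\<lambda>j. (a j)\<^sup>2)"
  shows "\<bar>a j\<bar> \<le> sqrt (\<Sum>i. (a i)\<^sup>2)"
proof -
  have "(\<Sum>i\<in>{j}. (a i)\<^sup>2) \<le> (\<Sum>i. (a i)\<^sup>2)"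
    using assms by (intro sum_le_suminf) auto
  then show ?thesis
    by (simp add: real_le_rsqrt)
qed

locale prior_density =
  fixes g :: "real \<Rightarrow> real"
  assumes g_cont: "continuous_on UNIV g"
    and g_pos: "\<And>x. 0 < g x"
    and g_integrable: "integrable lborel g"
    and g_integral: "integral\<^sup>L lborel g = 1"
begin

definition coord :: "real measure" where
  "coord = density lborel (\<lambda>x. ennreal (g x))"

definition prior :: "nat \<Rightarrow> (nat \<Rightarrow> real) measure" where
  "prior k = PiM {..<k} (\<lambda>_. coord)"

definition trunc_sq_dist :: "(nat \<Rightarrow> real) \<Rightarrow> nat \<Rightarrow> (nat \<Rightarrow> real) \<Rightarrow> real" where
  "trunc_sq_dist a k x = (\<Sum>j<k. (x j - a j)\<^sup>2) + tail_sq a k"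

definition sq_dist_law :: "(nat \<Rightarrow> real) \<Rightarrow> nat \<Rightarrow> real measure" where
  "sq_dist_law a k = distr (prior k) borel (trunc_sq_dist a k)"

lemma g_borel_measurable [measurable]: "g \<in> borel_measurable borel"
  using g_cont by (intro borel_measurable_continuous_onI) auto

lemma sets_coord [simp, measurable_cong]: "sets coord = sets borel"
  by (simp add: coord_def)

lemma space_coord [simp]: "space coord = UNIV"
  by (simp add: coord_def)

lemma prob_space_coord: "prob_space coord"
proof
  have "emeasure coord (space coord) = (\<integral>\<^sup>+ x. ennreal (g x) \<partial>lborel)"
    by (simp add: coord_def emeasure_density)
  also have "\<dots> = ennreal (integral\<^sup>L lborel g)"
    using g_integrable g_pos by (intro nn_integral_eq_integral) (auto intro: less_imp_le)
  finally show "emeasure coord (space coord) = 1"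
    using g_integral by simp
qed

interpretation coord: prob_space coord
  by (rule prob_space_coord)

interpretation product: product_sigma_finite "\<lambda>_::nat. coord"
  unfolding product_sigma_finite_def using coord.sigma_finite_measure_axioms by simp

lemma prob_space_prior: "prob_space (prior k)"
  unfolding prior_def by (intro prob_space_PiM prob_space_coord)

lemma trunc_sq_dist_measurable [measurable]: "trunc_sq_dist a k \<in> borel_measurable (prior k)"
  unfolding trunc_sq_dist_def prior_def by measurable

lemma trunc_sq_dist_ge_tail: "tail_sq a k \<le> trunc_sq_dist a k x"
  by (simp add: trunc_sq_dist_def sum_nonneg)

lemma real_distribution_sq_dist_law: "real_distribution (sq_dist_law a k)"
proof -
  interpret prob_space "prior k"
    by (rule prob_space_prior)
  show ?thesis
    unfolding sq_dist_law_def by (intro real_distribution_distr) simp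
qed

lemma prior_ball_eq_measure:
  "prior_ball g a k r = measure (prior k) {x \<in> space (prior k). trunc_sq_dist a k x \<le> r\<^sup>2}"
  by (simp add: prior_ball_def prior_def coord_def trunc_sq_dist_def)

lemma prior_ball_eq_cdf: "prior_ball g a k r = cdf (sq_dist_law a k) (r\<^sup>2)"
  unfolding prior_ball_eq_measure cdf_def sq_dist_law_def
  by (subst measure_distr) (auto intro!: arg_cong2[where f = measure])

lemma prior_ball_mono:
  assumes "0 \<le> r" "r \<le> r'"
  shows "prior_ball g a k r \<le> prior_ball g a k r'"
proof -
  interpret real_distribution "sq_dist_law a k"
    by (rule real_distribution_sq_dist_law)
  show ?thesis
    unfolding prior_ball_eq_cdf using assms by (intro cdf_nondecreasing power_mono) auto
qed

lemma emeasure_coord_finite: "finite A \<Longrightarrow> emeasure coord A = 0"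
proof -
  assume "finite A"
  then have A: "A \<in> null_sets lborel"
    by (rule finite_imp_null_set_lborel)
  then have "emeasure coord A = (\<integral>\<^sup>+ x. ennreal (g x) * indicator A x \<partial>lborel)"
    by (auto simp: coord_def emeasure_density)
  also have "\<dots> = 0"
    using A by (rule nn_integral_null_set)
  finally show ?thesis .
qed

text \<open>Integrating out the last coordinate leaves at most two points.\<close>
lemma emeasure_prior_sphere:
  "emeasure (prior (Suc k)) {x \<in> space (prior (Suc k)). (\<Sum>j<Suc k. (x j - a j)\<^sup>2) = t} = 0"
proof -
  let ?A = "{x \<in> space (prior (Suc k)). (\<Sum>j<Suc k. (x j - a j)\<^sup>2) = t}"
  have A: "?A \<in> sets (PiM (insert k {..<k}) (\<lambda>_. coord))"
    unfolding prior_def lessThan_Suc[symmetric] by measurable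
  have "emeasure (prior (Suc k)) ?A = (\<integral>\<^sup>+ x. indicator ?A x \<partial>(PiM (insert k {..<k}) (\<lambda>_. coord)))"
    using A by (simp add: prior_def lessThan_Suc)
  also have "\<dots> = (\<integral>\<^sup>+ x. (\<integral>\<^sup>+ y. indicator ?A (x(k := y)) \<partial>coord) \<partial>(PiM {..<k} (\<lambda>_. coord)))"
    using A by (intro product.product_nn_integral_insert) auto
  also have "\<dots> = (\<integral>\<^sup>+ x. 0 \<partial>(PiM {..<k} (\<lambda>_. coord)))"
  proof (intro nn_integral_cong)
    fix x
    define c where "c = t - (\<Sum>j<k. (x j - a j)\<^sup>2)"
    have "indicator ?A (x(k := y)) \<le> (indicator {a k + sqrt c, a k - sqrt c} y :: ennreal)" for y
    proof (cases "x(k := y) \<in> ?A")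
      case True
      then have "(\<Sum>j<k. (x j - a j)\<^sup>2) + (y - a k)\<^sup>2 = t"
        by (auto simp: lessThan_Suc intro!: sum.cong)
      then have "\<bar>y - a k\<bar> = sqrt c"
        by (metis add_diff_cancel_left' c_def real_sqrt_abs)
      then show ?thesis
        by (cases "y \<ge> a k") (auto simp: indicator_def)
    qed simp
    then have "(\<integral>\<^sup>+ y. indicator ?A (x(k := y)) \<partial>coord) \<le> emeasure coord {a k + sqrt c, a k - sqrt c}"
      by (simp add: nn_integral_mono flip: nn_integral_indicator)
    then show "(\<integral>\<^sup>+ y. indicator ?A (x(k := y)) \<partial>coord) = 0"
      by (simp add: emeasure_coord_finite)
  qed
  finally show ?thesis by simp
qed

lemma isCont_cdf_sq_dist_law:
  assumes "k \<ge> 1"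
  shows "isCont (cdf (sq_dist_law a k)) v"
proof -
  obtain k' where k: "k = Suc k'"
    using assms by (cases k) auto
  interpret real_distribution "sq_dist_law a k"
    by (rule real_distribution_sq_dist_law)
  have "measure (sq_dist_law a k) {v} = measure (prior k) {x \<in> space (prior k). trunc_sq_dist a k x = v}"
    unfolding sq_dist_law_def by (subst measure_distr) (auto intro!: arg_cong2[where f = measure])
  also have "{x \<in> space (prior k). trunc_sq_dist a k x = v}
      = {x \<in> space (prior (Suc k')). (\<Sum>j<Suc k'. (x j - a j)\<^sup>2) = v - tail_sq a k}"
    by (auto simp: trunc_sq_dist_def k)
  also have "measure (prior k) \<dots> = 0"
    using emeasure_prior_sphere[of k' a "v - tail_sq a k"] by (simp add: measure_def k)
  finally show ?thesis
    by (simp add: isCont_cdf)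
qed

lemma prior_ball_eq_0:
  assumes "r\<^sup>2 < tail_sq a k"
  shows "prior_ball g a k r = 0"
proof -
  have "\<not> trunc_sq_dist a k x \<le> r\<^sup>2" for x
    using assms trunc_sq_dist_ge_tail[of a k x] by linarith
  then show ?thesis
    by (simp add: prior_ball_eq_measure)
qed

lemma prior_ball_0:
  assumes k: "k \<ge> 1" and a: "summable (\<lambda>j. (a j)\<^sup>2)"
  shows "prior_ball g a k 0 = 0"
proof -
  interpret real_distribution "sq_dist_law a k"
    by (rule real_distribution_sq_dist_law)
  have "trunc_sq_dist a k x \<le> 0 \<longleftrightarrow> trunc_sq_dist a k x = 0" for x
    using tail_sq_nonneg[OF a, of k] trunc_sq_dist_ge_tail[of a k x] by linarith
  then have "prior_ball g a k 0 = measure (prior k) {x \<in> space (prior k). trunc_sq_dist a k x = 0}"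
    by (simp add: prior_ball_eq_measure)
  also have "\<dots> = measure (sq_dist_law a k) {0}"
    unfolding sq_dist_law_def by (subst measure_distr) (auto intro!: arg_cong2[where f = measure])
  also have "\<dots> = 0"
    using isCont_cdf_sq_dist_law[OF k] isCont_cdf by blast
  finally show ?thesis .
qed

lemma prior_ball_minus_exp_strict_mono:
  assumes n: "n \<ge> 1" and K: "K > 0" and e: "0 \<le> e" "e < e'"
  shows "prior_ball g a k (K * e) - exp (- (real n * e\<^sup>2)) < prior_ball g a k (K * e') - exp (- (real n * e'\<^sup>2))"
proof -
  have "prior_ball g a k (K * e) \<le> prior_ball g a k (K * e')"
    using K e by (intro prior_ball_mono) auto
  moreover have "e\<^sup>2 < e'\<^sup>2"
    using e by (intro power_strict_mono) auto
  then have "exp (- (real n * e'\<^sup>2)) < exp (- (real n * e\<^sup>2))"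
    using n by simp
  ultimately show ?thesis by linarith
qed

lemma prior_ball_crossing_exists:
  assumes n: "n \<ge> 1" and k: "k \<ge> 1" and K: "K > 0" and a: "summable (\<lambda>j. (a j)\<^sup>2)"
  shows "\<exists>e > 0. prior_ball g a k (K * e) = exp (- (real n * e\<^sup>2))"
proof -
  interpret real_distribution "sq_dist_law a k"
    by (rule real_distribution_sq_dist_law)
  define F where "F = cdf (sq_dist_law a k)"
  define \<phi> where "\<phi> e = F ((K * e)\<^sup>2) - exp (- (real n * e\<^sup>2))" for e
  have F_cont: "isCont F v" for v
    unfolding F_def using k by (rule isCont_cdf_sq_dist_law)
  have \<phi>_cont: "continuous_on UNIV \<phi>"
    unfolding \<phi>_def
    by (intro continuous_at_imp_continuous_on ballI continuous_intros
        continuous_at_compose[OF _ F_cont, unfolded comp_def])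
  have "eventually (\<lambda>v. 1 / 2 < F v) at_top"
    using cdf_lim_at_top_prob unfolding F_def by (rule order_tendstoD) simp
  moreover have "filterlim (\<lambda>e. (K * e)\<^sup>2) at_top at_top"
    using K by real_asymp
  ultimately have "eventually (\<lambda>e. 1 / 2 < F ((K * e)\<^sup>2)) at_top"
    by (rule eventually_compose_filterlim)
  moreover have "eventually (\<lambda>e::real. 1 \<le> e) at_top"
    by (rule eventually_ge_at_top)
  ultimately obtain b where b: "1 / 2 < F ((K * b)\<^sup>2)" "1 \<le> b"
    using eventually_happens'[OF trivial_limit_at_top_linorder] eventually_conj by blast
  have "1 * 1 \<le> real n * b\<^sup>2"
    using n b(2) by (intro mult_mono one_le_power) auto
  then have "exp (- (real n * b\<^sup>2)) \<le> inverse (exp 1)"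
    by (simp add: exp_minus[symmetric])
  also have "\<dots> \<le> inverse 2"
    using exp_ge_add_one_self_aux[of 1] by (intro le_imp_inverse_le) auto
  finally have "0 \<le> \<phi> b"
    using b by (simp add: \<phi>_def)
  moreover have F0: "F 0 = 0"
    using prior_ball_0[OF k a] by (simp add: prior_ball_eq_cdf F_def)
  ultimately obtain e where e: "0 \<le> e" "e \<le> b" "\<phi> e = 0"
    using IVT'[of \<phi> 0 0 b] \<phi>_cont b(2) by (auto simp: \<phi>_def intro: continuous_on_subset)
  moreover have "e \<noteq> 0"
    using e F0 by (auto simp: \<phi>_def)
  ultimately show ?thesis
    by (intro exI[of _ e]) (auto simp: \<phi>_def prior_ball_eq_cdf F_def)
qed

lemma eps_n_spec:
  assumes n: "n \<ge> 1" and k: "k \<ge> 1" and K: "K > 0" and a: "summable (\<lambda>j. (a j)\<^sup>2)"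
  shows "0 < eps_n g a K n k"
    and "prior_ball g a k (K * eps_n g a K n k) = exp (- (real n * (eps_n g a K n k)\<^sup>2))"
proof -
  have "\<exists>!e. e > 0 \<and> prior_ball g a k (K * e) = exp (- (real n * e\<^sup>2))"
  proof (rule ex_ex1I)
    show "\<exists>e. e > 0 \<and> prior_ball g a k (K * e) = exp (- (real n * e\<^sup>2))"
      using prior_ball_crossing_exists[OF assms] by blast
  next
    fix e e' assume "e > 0 \<and> prior_ball g a k (K * e) = exp (- (real n * e\<^sup>2))"
      and "e' > 0 \<and> prior_ball g a k (K * e') = exp (- (real n * e'\<^sup>2))"
    then show "e = e'"
      using prior_ball_minus_exp_strict_mono[OF n K, of _ _ a k]
      by (metis diff_self less_irrefl less_le linorder_neqE_linordered_idom)
  qed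
  from theI'[OF this] show "0 < eps_n g a K n k"
    and "prior_ball g a k (K * eps_n g a K n k) = exp (- (real n * (eps_n g a K n k)\<^sup>2))"
    unfolding eps_n_def by auto
qed

lemma eps_n_le_of_prior_ball_ge:
  assumes n: "n \<ge> 1" and k: "k \<ge> 1" and K: "K > 0" and a: "summable (\<lambda>j. (a j)\<^sup>2)"
    and e: "0 \<le> e" and ball: "exp (- (real n * e\<^sup>2)) \<le> prior_ball g a k (K * e)"
  shows "eps_n g a K n k \<le> e"
proof (rule ccontr)
  assume "\<not> eps_n g a K n k \<le> e"
  then have "prior_ball g a k (K * e) - exp (- (real n * e\<^sup>2))
      < prior_ball g a k (K * eps_n g a K n k) - exp (- (real n * (eps_n g a K n k)\<^sup>2))"
    using e by (intro prior_ball_minus_exp_strict_mono[OF n K]) auto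
  then show False
    using ball eps_n_spec(2)[OF n k K a] by linarith
qed

lemma le_eps_n_of_prior_ball_le:
  assumes n: "n \<ge> 1" and k: "k \<ge> 1" and K: "K > 0" and a: "summable (\<lambda>j. (a j)\<^sup>2)"
    and ball: "prior_ball g a k (K * e) \<le> exp (- (real n * e\<^sup>2))"
  shows "e \<le> eps_n g a K n k"
proof (rule ccontr)
  assume "\<not> e \<le> eps_n g a K n k"
  then have "prior_ball g a k (K * eps_n g a K n k) - exp (- (real n * (eps_n g a K n k)\<^sup>2))
      < prior_ball g a k (K * e) - exp (- (real n * e\<^sup>2))"
    using eps_n_spec(1)[OF n k K a] by (intro prior_ball_minus_exp_strict_mono[OF n K]) auto
  then show False
    using ball eps_n_spec(2)[OF n k K a] by linarith
qed

lemma tail_sq_le_eps_n_sq: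
  assumes n: "n \<ge> 1" and k: "k \<ge> 1" and K: "K > 0" and a: "summable (\<lambda>j. (a j)\<^sup>2)"
  shows "tail_sq a k \<le> K\<^sup>2 * (eps_n g a K n k)\<^sup>2"
proof (rule ccontr)
  assume "\<not> ?thesis"
  then have "prior_ball g a k (K * eps_n g a K n k) = 0"
    by (intro prior_ball_eq_0) (simp add: power_mult_distrib)
  then show False
    using eps_n_spec(2)[OF assms] by simp
qed

lemma emeasure_coord_interval_le:
  assumes s: "s \<ge> 0" and G: "\<And>x. x \<in> {b - s .. b + s} \<Longrightarrow> g x \<le> G"
  shows "emeasure coord {b - s .. b + s} \<le> ennreal (2 * s * G)"
proof -
  have G0: "G \<ge> 0"
    using G[of b] g_pos[of b] s by simp
  have "emeasure coord {b - s .. b + s} = (\<integral>\<^sup>+ x. ennreal (g x) * indicator {b - s .. b + s} x \<partial>lborel)"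
    by (simp add: coord_def emeasure_density)
  also have "\<dots> \<le> (\<integral>\<^sup>+ x. ennreal G * indicator {b - s .. b + s} x \<partial>lborel)"
    by (intro nn_integral_mono) (auto simp: indicator_def G intro!: ennreal_leI)
  also have "\<dots> = ennreal (2 * s * G)"
    using s G0 by (simp add: nn_integral_cmult_indicator ennreal_mult[symmetric] mult_ac)
  finally show ?thesis .
qed

lemma emeasure_coord_interval_ge:
  assumes s: "s \<ge> 0" and m: "m \<ge> 0" and G: "\<And>x. x \<in> {b - s .. b + s} \<Longrightarrow> m \<le> g x"
  shows "ennreal (2 * s * m) \<le> emeasure coord {b - s .. b + s}"
proof -
  have "ennreal (2 * s * m) = (\<integral>\<^sup>+ x. ennreal m * indicator {b - s .. b + s} x \<partial>lborel)"
    using s m by (simp add: nn_integral_cmult_indicator ennreal_mult[symmetric] mult_ac)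
  also have "\<dots> \<le> (\<integral>\<^sup>+ x. ennreal (g x) * indicator {b - s .. b + s} x \<partial>lborel)"
    by (intro nn_integral_mono) (auto simp: indicator_def G intro!: ennreal_leI)
  also have "\<dots> = emeasure coord {b - s .. b + s}"
    by (simp add: coord_def emeasure_density)
  finally show ?thesis .
qed

lemma prior_ball_ge_box:
  assumes d: "d \<ge> 0" and m: "m \<ge> 0" and r: "real k * d\<^sup>2 + tail_sq a k \<le> r\<^sup>2"
    and G: "\<And>j x. j < k \<Longrightarrow> x \<in> {a j - d .. a j + d} \<Longrightarrow> m \<le> g x"
  shows "(2 * d * m) ^ k \<le> prior_ball g a k r"
proof -
  interpret prob_space "prior k"
    by (rule prob_space_prior)
  let ?B = "PiE {..<k} (\<lambda>j. {a j - d .. a j + d})"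
  have B: "?B \<in> sets (prior k)"
    unfolding prior_def by (intro sets_PiM_I_finite) auto
  have "emeasure (prior k) ?B = (\<Prod>j<k. emeasure coord {a j - d .. a j + d})"
    unfolding prior_def by (intro product.emeasure_PiM) auto
  also have "\<dots> \<ge> (\<Prod>j<k. ennreal (2 * d * m))"
    using d m G by (intro prod_mono_ennreal emeasure_coord_interval_ge) auto
  finally have "ennreal ((2 * d * m) ^ k) \<le> emeasure (prior k) ?B"
    using d m by (simp add: ennreal_power)
  then have "(2 * d * m) ^ k \<le> measure (prior k) ?B"
    by (simp add: emeasure_eq_measure)
  also have "\<dots> \<le> measure (prior k) {x \<in> space (prior k). trunc_sq_dist a k x \<le> r\<^sup>2}"
  proof (intro finite_measure_mono subsetI)
    fix x assume x: "x \<in> ?B"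
    have "(\<Sum>j<k. (x j - a j)\<^sup>2) \<le> (\<Sum>j<k. d\<^sup>2)"
    proof (intro sum_mono)
      fix j assume "j \<in> {..<k}"
      then have "a j - d \<le> x j \<and> x j \<le> a j + d"
        using x by (auto simp: PiE_iff)
      then have "\<bar>x j - a j\<bar> \<le> d"
        by (simp add: abs_le_iff)
      then show "(x j - a j)\<^sup>2 \<le> d\<^sup>2"
        by (metis abs_ge_zero power2_abs power_mono)
    qed
    then show "x \<in> {x \<in> space (prior k). trunc_sq_dist a k x \<le> r\<^sup>2}"
      using x B sets.sets_into_space r by (auto simp: trunc_sq_dist_def)
  qed (auto simp: trunc_sq_dist_def prior_def)
  finally show ?thesis
    by (simp add: prior_ball_eq_measure)
qed

lemma nn_integral_coord_exp_sq_le: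
  assumes l: "l > 0" and s: "s \<ge> 0" and G: "\<And>x. x \<in> {b - s .. b + s} \<Longrightarrow> g x \<le> G"
  shows "(\<integral>\<^sup>+ y. ennreal (exp (- (l * (y - b)\<^sup>2))) \<partial>coord) \<le> ennreal (2 * s * G + exp (- (l * s\<^sup>2)))"
proof -
  have G0: "G \<ge> 0"
    using G[of b] g_pos[of b] s by simp
  have "ennreal (exp (- (l * (y - b)\<^sup>2))) \<le> indicator {b - s .. b + s} y + ennreal (exp (- (l * s\<^sup>2)))" for y
  proof (cases "y \<in> {b - s .. b + s}")
    case True
    then show ?thesis
      using l by (simp add: ennreal_le_1 add_increasing2)
  next
    case False
    then have "s \<le> \<bar>y - b\<bar>"
      by auto
    then have "s\<^sup>2 \<le> (y - b)\<^sup>2"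
      using power_mono[OF _ s, of "\<bar>y - b\<bar>" 2] by simp
    then show ?thesis
      using l False by (simp add: ennreal_leI)
  qed
  then have "(\<integral>\<^sup>+ y. ennreal (exp (- (l * (y - b)\<^sup>2))) \<partial>coord)
      \<le> (\<integral>\<^sup>+ y. indicator {b - s .. b + s} y + ennreal (exp (- (l * s\<^sup>2))) \<partial>coord)"
    by (intro nn_integral_mono)
  also have "\<dots> = emeasure coord {b - s .. b + s} + ennreal (exp (- (l * s\<^sup>2)))"
    using coord.emeasure_space_1 by (subst nn_integral_add) auto
  also have "\<dots> \<le> ennreal (2 * s * G) + ennreal (exp (- (l * s\<^sup>2)))"
    using s G by (intro add_right_mono emeasure_coord_interval_le) auto
  also have "\<dots> = ennreal (2 * s * G + exp (- (l * s\<^sup>2)))"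
    using s G0 by (simp add: ennreal_plus)
  finally show ?thesis .
qed

lemma nn_integral_prior_exp_sq_le:
  assumes l: "l > 0" and s: "s \<ge> 0" and G0: "G \<ge> 0"
    and G: "\<And>j x. j < k \<Longrightarrow> x \<in> {a j - s .. a j + s} \<Longrightarrow> g x \<le> G"
  shows "(\<integral>\<^sup>+ x. (\<Prod>j<k. ennreal (exp (- (l * (x j - a j)\<^sup>2)))) \<partial>prior k)
    \<le> ennreal ((2 * s * G + exp (- (l * s\<^sup>2))) ^ k)"
proof -
  let ?c = "2 * s * G + exp (- (l * s\<^sup>2))"
  have "(\<integral>\<^sup>+ x. (\<Prod>j<k. ennreal (exp (- (l * (x j - a j)\<^sup>2)))) \<partial>prior k)
      = (\<Prod>j<k. (\<integral>\<^sup>+ y. ennreal (exp (- (l * (y - a j)\<^sup>2))) \<partial>coord))"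
    unfolding prior_def
    by (intro product.product_nn_integral_prod[where f = "\<lambda>j y. ennreal (exp (- (l * (y - a j)\<^sup>2)))"]) auto
  also have "\<dots> \<le> (\<Prod>j<k. ennreal ?c)"
    using l s G by (intro prod_mono_ennreal nn_integral_coord_exp_sq_le) auto
  also have "\<dots> = ennreal ?c ^ k"
    by simp
  also have "\<dots> = ennreal (?c ^ k)"
    using s G0 by (intro ennreal_power) simp
  finally show ?thesis .
qed

text \<open>Chernoff's bound: \<open>1{S \<le> r\<^sup>2} \<le> exp (l r\<^sup>2 - l S)\<close>, and the exponential factorises over the coordinates.\<close>
lemma prior_ball_le_chernoff:
  assumes l: "l > 0" and s: "s \<ge> 0" and G0: "G \<ge> 0" and T: "0 \<le> tail_sq a k"
    and G: "\<And>j x. j < k \<Longrightarrow> x \<in> {a j - s .. a j + s} \<Longrightarrow> g x \<le> G"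
  shows "prior_ball g a k r \<le> exp (l * r\<^sup>2) * (2 * s * G + exp (- (l * s\<^sup>2))) ^ k"
proof -
  interpret prob_space "prior k"
    by (rule prob_space_prior)
  let ?A = "{x \<in> space (prior k). trunc_sq_dist a k x \<le> r\<^sup>2}"
  have "indicator ?A x \<le> ennreal (exp (l * r\<^sup>2)) * (\<Prod>j<k. ennreal (exp (- (l * (x j - a j)\<^sup>2))))" for x
  proof (cases "x \<in> ?A")
    case True
    then have "0 \<le> l * r\<^sup>2 + (\<Sum>j<k. - (l * (x j - a j)\<^sup>2))"
      using l T by (simp add: trunc_sq_dist_def sum_negf sum_distrib_left[symmetric])
    then have "1 \<le> exp (l * r\<^sup>2 + (\<Sum>j<k. - (l * (x j - a j)\<^sup>2)))"
      by simp
    also have "\<dots> = exp (l * r\<^sup>2) * (\<Prod>j<k. exp (- (l * (x j - a j)\<^sup>2)))"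
      by (simp add: exp_add exp_sum)
    finally have "ennreal 1 \<le> ennreal (exp (l * r\<^sup>2) * (\<Prod>j<k. exp (- (l * (x j - a j)\<^sup>2))))"
      by (rule ennreal_leI)
    also have "\<dots> = ennreal (exp (l * r\<^sup>2)) * (\<Prod>j<k. ennreal (exp (- (l * (x j - a j)\<^sup>2))))"
      by (simp add: ennreal_mult prod_nonneg prod_ennreal)
    finally show ?thesis
      using True by simp
  qed simp
  then have "emeasure (prior k) ?A
      \<le> (\<integral>\<^sup>+ x. ennreal (exp (l * r\<^sup>2)) * (\<Prod>j<k. ennreal (exp (- (l * (x j - a j)\<^sup>2)))) \<partial>prior k)"
    by (simp add: nn_integral_mono flip: nn_integral_indicator)
  also have "\<dots> = ennreal (exp (l * r\<^sup>2)) * (\<integral>\<^sup>+ x. (\<Prod>j<k. ennreal (exp (- (l * (x j - a j)\<^sup>2)))) \<partial>prior k)"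
    by (intro nn_integral_cmult) (simp add: prior_def)
  also have "\<dots> \<le> ennreal (exp (l * r\<^sup>2)) * ennreal ((2 * s * G + exp (- (l * s\<^sup>2))) ^ k)"
    using l s G0 G by (intro mult_left_mono nn_integral_prior_exp_sq_le) auto
  also have "\<dots> = ennreal (exp (l * r\<^sup>2) * (2 * s * G + exp (- (l * s\<^sup>2))) ^ k)"
    using s G0 by (intro ennreal_mult[symmetric]) auto
  finally have "measure (prior k) ?A \<le> exp (l * r\<^sup>2) * (2 * s * G + exp (- (l * s\<^sup>2))) ^ k"
    using s G0 by (simp add: emeasure_eq_measure)
  then show ?thesis
    unfolding prior_ball_eq_measure .
qed

lemma prior_ball_le_small_radius:
  assumes \<rho>: "0 < \<rho>" "\<rho> \<le> 1" and r: "r\<^sup>2 = real k * \<rho>\<^sup>2" and T: "0 \<le> tail_sq a k"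
    and G: "0 \<le> G" "\<And>j y. j < k \<Longrightarrow> \<bar>y - a j\<bar> \<le> 1 \<Longrightarrow> g y \<le> G"
  shows "prior_ball g a k r \<le> (exp 1 * (2 * G + 1) * sqrt \<rho>) ^ k"
proof -
  define l where "l = 1 / \<rho>\<^sup>2"
  define s where "s = sqrt \<rho>"
  have s: "0 \<le> s" "s \<le> 1"
    using \<rho> by (auto simp: s_def)
  have "prior_ball g a k r \<le> exp (l * r\<^sup>2) * (2 * s * G + exp (- (l * s\<^sup>2))) ^ k"
    using \<rho> s T G by (intro prior_ball_le_chernoff) (auto simp: l_def abs_le_iff)
  also have "\<dots> = (exp 1 * (2 * s * G + exp (- (1 / \<rho>)))) ^ k"
  proof -
    have "s\<^sup>2 = \<rho>"
      using \<rho> by (simp add: s_def)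
    then have "l * s\<^sup>2 = 1 / \<rho>"
      using \<rho> by (simp add: l_def power2_eq_square)
    moreover have "l * r\<^sup>2 = real k"
      using \<rho> by (simp add: l_def r)
    ultimately show ?thesis
      by (simp add: power_mult_distrib exp_of_nat_mult[symmetric])
  qed
  also have "\<dots> \<le> (exp 1 * (2 * G + 1) * sqrt \<rho>) ^ k"
  proof (intro power_mono)
    have "1 / \<rho> \<le> exp (1 / \<rho>)"
      using exp_ge_add_one_self[of "1 / \<rho>"] by linarith
    then have "exp (- (1 / \<rho>)) \<le> \<rho>"
      using \<rho> by (simp add: exp_minus field_simps)
    also have "\<rho> \<le> s"
      using \<rho> mult_left_mono[OF s(2) s(1)] by (simp add: s_def)
    finally show "exp 1 * (2 * s * G + exp (- (1 / \<rho>))) \<le> exp 1 * (2 * G + 1) * sqrt \<rho>"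
      by (simp add: s_def algebra_simps)
  qed (use s G in auto)
  finally show ?thesis .
qed

lemma g_bounds_near:
  assumes "summable (\<lambda>j. (a j)\<^sup>2)"
  obtains m G where "0 < m" "0 < G" "\<And>j y. \<bar>y - a j\<bar> \<le> 1 \<Longrightarrow> m \<le> g y \<and> g y \<le> G"
proof -
  define B where "B = sqrt (\<Sum>i. (a i)\<^sup>2) + 1"
  have near: "y \<in> {-B..B}" if "\<bar>y - a j\<bar> \<le> 1" for y j
    using that abs_le_sqrt_suminf_sq[OF assms, of j] by (auto simp: B_def abs_le_iff)
  have I: "compact {-B..B}" "{-B..B} \<noteq> {}" and g: "continuous_on {-B..B} g"
    using near[of "a 0" 0] g_cont by (auto intro: continuous_on_subset)
  obtain y1 where "\<forall>y\<in>{-B..B}. g y1 \<le> g y"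
    using continuous_attains_inf[OF I g] by blast
  moreover obtain y2 where "\<forall>y\<in>{-B..B}. g y \<le> g y2"
    using continuous_attains_sup[OF I g] by blast
  ultimately show ?thesis
    using g_pos near by (intro that[of "g y1" "g y2"]) auto
qed

lemma dim_le_eps_n_sq:
  assumes a: "summable (\<lambda>j. (a j)\<^sup>2)" and K: "K > 0" and n: "1 < n" "0 < ln (real n)" and k: "1 \<le> k"
    and G: "0 < G" "\<And>j y. \<bar>y - a j\<bar> \<le> 1 \<Longrightarrow> g y \<le> G"
    and small: "K * sqrt (ln (real n) / (16 * real n)) \<le> 1"
      "exp 1 * (2 * G + 1) * sqrt (K * sqrt (ln (real n) / (16 * real n))) \<le> exp (- ln (real n) / 16)"
  shows "real k * ln (real n) / (16 * real n) \<le> (eps_n g a K n k)\<^sup>2"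
proof -
  define \<rho> where "\<rho> = K * sqrt (ln (real n) / (16 * real n))"
  define e where "e = sqrt (real k * ln (real n) / (16 * real n))"
  have \<rho>: "0 < \<rho>" "\<rho> \<le> 1"
    using small n K by (auto simp: \<rho>_def)
  have e: "0 \<le> e" "e\<^sup>2 = real k * ln (real n) / (16 * real n)"
    using n by (simp_all add: e_def)
  have "(K * e)\<^sup>2 = real k * \<rho>\<^sup>2"
    using e(2) n by (simp add: \<rho>_def power_mult_distrib)
  then have "prior_ball g a k (K * e) \<le> (exp 1 * (2 * G + 1) * sqrt \<rho>) ^ k"
    using \<rho> G tail_sq_nonneg[OF a] by (intro prior_ball_le_small_radius) auto
  also have "\<dots> \<le> exp (- ln (real n) / 16) ^ k"
    using small G \<rho> by (intro power_mono) (auto simp: \<rho>_def)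
  also have "\<dots> = exp (- (real n * e\<^sup>2))"
    using n by (simp add: e(2) exp_of_nat_mult[symmetric] field_simps)
  finally have "e \<le> eps_n g a K n k"
    using n k K a by (intro le_eps_n_of_prior_ball_le) auto
  then show ?thesis
    using e by (metis power_mono)
qed

lemma eps_n_sq_le_bias_plus_dim:
  assumes a: "summable (\<lambda>j. (a j)\<^sup>2)" and K: "K > 0" and n: "1 < n" "0 < ln (real n)" and k: "1 \<le> k"
    and m: "0 < m" "\<And>j y. \<bar>y - a j\<bar> \<le> 1 \<Longrightarrow> m \<le> g y"
    and C: "1 \<le> C" "1 \<le> K\<^sup>2 * C"
    and small: "sqrt (ln (real n) / real n) \<le> 1" "1 / real n \<le> 2 * m * sqrt (ln (real n) / real n)"
  shows "(eps_n g a K n k)\<^sup>2 \<le> C * (tail_sq a k + real k * ln (real n) / real n)"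
proof -
  define T where "T = tail_sq a k"
  define u where "u = ln (real n) / real n"
  define e where "e = sqrt (C * (T + real k * u))"
  define d where "d = sqrt u"
  have T: "0 \<le> T" and u: "0 < u"
    using tail_sq_nonneg[OF a] n by (auto simp: T_def u_def)
  have e: "0 \<le> e" "e\<^sup>2 = C * (T + real k * u)"
    using C T u by (simp_all add: e_def)
  have "real k * d\<^sup>2 + tail_sq a k \<le> 1 * (T + real k * u)"
    using u by (simp add: d_def T_def)
  also have "\<dots> \<le> (K * e)\<^sup>2"
    using mult_right_mono[OF C(2), of "T + real k * u"] T u
    by (simp add: e(2) power_mult_distrib mult.assoc[symmetric])
  finally have box: "real k * d\<^sup>2 + tail_sq a k \<le> (K * e)\<^sup>2" .
  have "d \<le> 1"
    using small(1) by (simp add: d_def u_def)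
  then have "m \<le> g x" if "x \<in> {a j - d .. a j + d}" for j x
    using that by (intro m(2)[of x j]) (auto simp: abs_le_iff)
  then have "(2 * d * m) ^ k \<le> prior_ball g a k (K * e)"
    using u m by (intro prior_ball_ge_box[OF _ _ box]) (auto simp: d_def)
  moreover have "exp (- (real n * e\<^sup>2)) \<le> (2 * d * m) ^ k"
  proof -
    have "real n * e\<^sup>2 = C * (real n * T) + C * (real k * ln (real n))"
      using n by (simp add: e(2) u_def field_simps)
    moreover have "0 \<le> C * (real n * T)"
      using C T by simp
    moreover have "real k * ln (real n) \<le> C * (real k * ln (real n))"
      using mult_right_mono[OF C(1), of "real k * ln (real n)"] n by simp
    ultimately have "exp (- (real n * e\<^sup>2)) \<le> exp (real k * - ln (real n))"
      by simp
    also have "\<dots> = (1 / real n) ^ k"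
      using n by (simp add: exp_of_nat_mult exp_minus inverse_eq_divide power_one_over)
    also have "\<dots> \<le> (2 * d * m) ^ k"
      using small n by (intro power_mono) (auto simp: d_def u_def mult_ac)
    finally show ?thesis .
  qed
  ultimately have "eps_n g a K n k \<le> e"
    using n k K a e(1) by (intro eps_n_le_of_prior_ball_ge) auto
  then have "(eps_n g a K n k)\<^sup>2 \<le> e\<^sup>2"
    using eps_n_spec(1)[of n k K a] n k K a by (intro power_mono) auto
  then show ?thesis
    using e(2) by (simp add: T_def u_def)
qed

lemma eventually_eps_n_sq_ge:
  assumes a: "summable (\<lambda>j. (a j)\<^sup>2)" and K: "K > 0"
  defines "c \<equiv> min (1 / (2 * K\<^sup>2)) (1 / 32)"
  shows "eventually (\<lambda>n. \<forall>k \<ge> 1.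
    c * (tail_sq a k + real k * ln (real n) / real n) \<le> (eps_n g a K n k)\<^sup>2) sequentially"
proof -
  obtain G where G: "0 < G" "\<And>j y. \<bar>y - a j\<bar> \<le> 1 \<Longrightarrow> g y \<le> G"
    using g_bounds_near[OF a] by metis
  have "eventually (\<lambda>n::nat. exp 1 * (2 * G + 1) * sqrt (K * sqrt (ln (real n) / (16 * real n)))
      \<le> exp (- ln (real n) / 16)) sequentially"
    using K G by real_asymp
  moreover have "eventually (\<lambda>n::nat. K * sqrt (ln (real n) / (16 * real n)) \<le> 1) sequentially"
    using K by real_asymp
  moreover have "eventually (\<lambda>n::nat. 0 < ln (real n)) sequentially"
    by real_asymp
  moreover have "eventually (\<lambda>n::nat. 1 < n) sequentially"
    by (rule eventually_gt_at_top)
  ultimately show ?thesis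
  proof (eventually_elim, intro allI impI)
    fix n k :: nat assume n: "exp 1 * (2 * G + 1) * sqrt (K * sqrt (ln (real n) / (16 * real n))) \<le> exp (- ln (real n) / 16)"
      "K * sqrt (ln (real n) / (16 * real n)) \<le> 1" "0 < ln (real n)" "1 < n" and k: "1 \<le> k"
    define v where "v = real k * ln (real n) / real n"
    have "c * tail_sq a k \<le> 1 / (2 * K\<^sup>2) * tail_sq a k"
      using tail_sq_nonneg[OF a] by (intro mult_right_mono) (auto simp: c_def)
    also have "\<dots> \<le> 1 / (2 * K\<^sup>2) * (K\<^sup>2 * (eps_n g a K n k)\<^sup>2)"
      using tail_sq_le_eps_n_sq[of n k K a] n k K a by (intro mult_left_mono) auto
    finally have cT: "c * tail_sq a k \<le> (eps_n g a K n k)\<^sup>2 / 2"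
      using K by simp
    have "real k * ln (real n) / (16 * real n) \<le> (eps_n g a K n k)\<^sup>2"
      by (rule dim_le_eps_n_sq[OF a K n(4,3) k G(1)]) (use G(2) n in auto)
    then have "v / 16 \<le> (eps_n g a K n k)\<^sup>2"
      by (simp add: v_def mult.commute)
    moreover have "0 \<le> v"
      using n by (simp add: v_def)
    then have "c * v \<le> v / 32"
      using mult_right_mono[of c "1 / 32" v] by (simp add: c_def)
    ultimately have "c * v \<le> (eps_n g a K n k)\<^sup>2 / 2"
      by linarith
    with cT show "c * (tail_sq a k + real k * ln (real n) / real n) \<le> (eps_n g a K n k)\<^sup>2"
      unfolding distrib_left v_def by linarith
  qed
qed

lemma eventually_eps_n_sq_le:
  assumes a: "summable (\<lambda>j. (a j)\<^sup>2)" and K: "K > 0"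
  defines "C \<equiv> max 1 (1 / K\<^sup>2)"
  shows "eventually (\<lambda>n. \<forall>k \<ge> 1.
    (eps_n g a K n k)\<^sup>2 \<le> C * (tail_sq a k + real k * ln (real n) / real n)) sequentially"
proof -
  obtain m where m: "0 < m" "\<And>j y. \<bar>y - a j\<bar> \<le> 1 \<Longrightarrow> m \<le> g y"
    using g_bounds_near[OF a] by metis
  have "K\<^sup>2 * (1 / K\<^sup>2) \<le> K\<^sup>2 * C"
    by (intro mult_left_mono) (auto simp: C_def)
  then have C: "1 \<le> C" "1 \<le> K\<^sup>2 * C"
    using K by (simp_all add: C_def)
  have "eventually (\<lambda>n::nat. sqrt (ln (real n) / real n) \<le> 1) sequentially"
    by real_asymp
  moreover have "eventually (\<lambda>n::nat. 1 / real n \<le> 2 * m * sqrt (ln (real n) / real n)) sequentially"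
    using m by real_asymp
  moreover have "eventually (\<lambda>n::nat. 0 < ln (real n)) sequentially"
    by real_asymp
  moreover have "eventually (\<lambda>n::nat. 1 < n) sequentially"
    by (rule eventually_gt_at_top)
  ultimately show ?thesis
    by eventually_elim (use eps_n_sq_le_bias_plus_dim[OF a K _ _ _ m C] in auto)
qed

lemma eps_n_sq_two_sided:
  assumes a: "summable (\<lambda>j. (a j)\<^sup>2)" and K: "K > 0"
  obtains c C N where "0 < c" "0 < C"
    "\<And>n k. N \<le> n \<Longrightarrow> 1 \<le> k \<Longrightarrow>
      c * (tail_sq a k + real k * ln (real n) / real n) \<le> (eps_n g a K n k)\<^sup>2 \<and>
      (eps_n g a K n k)\<^sup>2 \<le> C * (tail_sq a k + real k * ln (real n) / real n)"
proof -
  obtain N1 where "\<And>n k. N1 \<le> n \<Longrightarrow> 1 \<le> k \<Longrightarrow> min (1 / (2 * K\<^sup>2)) (1 / 32) *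
      (tail_sq a k + real k * ln (real n) / real n) \<le> (eps_n g a K n k)\<^sup>2"
    using eventually_eps_n_sq_ge[OF a K] unfolding eventually_sequentially by blast
  moreover obtain N2 where "\<And>n k. N2 \<le> n \<Longrightarrow> 1 \<le> k \<Longrightarrow>
      (eps_n g a K n k)\<^sup>2 \<le> max 1 (1 / K\<^sup>2) * (tail_sq a k + real k * ln (real n) / real n)"
    using eventually_eps_n_sq_le[OF a K] unfolding eventually_sequentially by blast
  ultimately show ?thesis
    using K by (intro that[of "min (1 / (2 * K\<^sup>2)) (1 / 32)" "max 1 (1 / K\<^sup>2)" "max N1 N2"]) auto
qed


lemma eps_n0_sq_le_rate_of_smooth:
  assumes smooth: "\<beta> > 0" "L > 0" "th0 \<in> H_inf \<beta> L \<union> S_cls \<beta> L" and \<epsilon>: "\<epsilon> > 0" and K: "K > 0"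
    and m_slow: "\<And>\<delta>. \<delta> > 0 \<Longrightarrow> ((\<lambda>n. m n / real n powr \<delta>) \<longlongrightarrow> 0) sequentially"
  shows "\<exists>C N. C > 0 \<and> (\<forall>n \<ge> N. eps_n0_sq g th0 K m (Lambda_n \<epsilon> n) n
      \<le> ereal (C * ((real n / ln (real n)) powr (- \<beta> / (2 * \<beta> + 1)))\<^sup>2))"
proof -
  have th0: "summable (\<lambda>j. (th0 j)\<^sup>2)"
    using smooth smooth_summable by blast
  obtain L' where L': "L' \<ge> 0" and tail: "\<And>k. k \<ge> 1 \<Longrightarrow> tail_sq th0 k \<le> L' * real k powr (- (2 * \<beta>))"
    using tail_sq_le_of_smooth[OF smooth] by blast
  obtain c C N where "0 < c" "0 < C" "\<And>n k. N \<le> n \<Longrightarrow> 1 \<le> k \<Longrightarrow>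
      c * (tail_sq th0 k + real k * ln (real n) / real n) \<le> (eps_n g th0 K n k)\<^sup>2 \<and>
      (eps_n g th0 K n k)\<^sup>2 \<le> C * (tail_sq th0 k + real k * ln (real n) / real n)"
    using eps_n_sq_two_sided[OF th0 K] by blast
  then show ?thesis
    by (rule eps_n0_sq_le_rate[OF _ _ _ tail L' th0 smooth(1) \<epsilon> m_slow])
qed

lemma eps_n_rates:
  assumes th0: "summable (\<lambda>j. (th0 j)\<^sup>2)" and K: "K > 0"
    and m_slow: "\<And>\<delta>. \<delta> > 0 \<Longrightarrow> ((\<lambda>n. m n / real n powr \<delta>) \<longlongrightarrow> 0) sequentially"
  shows "\<exists>\<epsilon>0 > 0. \<forall>\<epsilon>. 0 < \<epsilon> \<and> \<epsilon> \<le> \<epsilon>0 \<longrightarrow>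
      (\<exists>c C N. c > 0 \<and> C > 0 \<and> (\<forall>n \<ge> N. \<forall>k \<in> Lambda_n \<epsilon> n.
          c * (tail_sq th0 k + real k * ln (real n) / real n) \<le> (eps_n g th0 K n k)\<^sup>2 \<and>
          (eps_n g th0 K n k)\<^sup>2 \<le> C * (tail_sq th0 k + real k * ln (real n) / real n)))
    \<and> (\<forall>\<beta> L. \<beta> > 0 \<and> L > 0 \<and> th0 \<in> H_inf \<beta> L \<union> S_cls \<beta> L \<longrightarrow>
        (\<exists>C N. C > 0 \<and> (\<forall>n \<ge> N. eps_n0_sq g th0 K m (Lambda_n \<epsilon> n) n
          \<le> ereal (C * ((real n / ln (real n)) powr (- \<beta> / (2 * \<beta> + 1)))\<^sup>2))))"
proof -
  obtain c C N where two_sided: "0 < c" "0 < C" "\<And>n k. N \<le> n \<Longrightarrow> 1 \<le> k \<Longrightarrow>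
      c * (tail_sq th0 k + real k * ln (real n) / real n) \<le> (eps_n g th0 K n k)\<^sup>2 \<and>
      (eps_n g th0 K n k)\<^sup>2 \<le> C * (tail_sq th0 k + real k * ln (real n) / real n)"
    using eps_n_sq_two_sided[OF th0 K] by blast
  have "\<exists>c C N. c > 0 \<and> C > 0 \<and> (\<forall>n \<ge> N. \<forall>k \<in> Lambda_n \<epsilon> n.
      c * (tail_sq th0 k + real k * ln (real n) / real n) \<le> (eps_n g th0 K n k)\<^sup>2 \<and>
      (eps_n g th0 K n k)\<^sup>2 \<le> C * (tail_sq th0 k + real k * ln (real n) / real n))" for \<epsilon>
    using two_sided by (intro exI[of _ c] exI[of _ C] exI[of _ N]) (auto simp: Lambda_n_def)
  then show ?thesis
    using eps_n0_sq_le_rate_of_smooth[OF _ _ _ _ K m_slow] zero_less_one by blast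
qed

lemma eps_n0_sq_rate_attained:
  assumes b: "\<beta> > 0" and L: "L > 0" and K: "K > 0"
    and m_slow: "\<And>\<delta>. \<delta> > 0 \<Longrightarrow> ((\<lambda>n. m n / real n powr \<delta>) \<longlongrightarrow> 0) sequentially"
  shows "\<exists>th0 \<in> H_inf \<beta> L \<union> S_cls \<beta> L. \<exists>\<epsilon>0 > 0. \<forall>\<epsilon>. 0 < \<epsilon> \<and> \<epsilon> \<le> \<epsilon>0 \<longrightarrow>
      (\<exists>c C N. c > 0 \<and> C > 0 \<and> (\<forall>n \<ge> N.
        ereal (c * ((real n / ln (real n)) powr (- \<beta> / (2 * \<beta> + 1)))\<^sup>2)
          \<le> eps_n0_sq g th0 K m (Lambda_n \<epsilon> n) n \<and>
        eps_n0_sq g th0 K m (Lambda_n \<epsilon> n) n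
          \<le> ereal (C * ((real n / ln (real n)) powr (- \<beta> / (2 * \<beta> + 1)))\<^sup>2)))"
proof -
  let ?th = "H_inf_extremal \<beta> L"
  have th: "?th \<in> H_inf \<beta> L \<union> S_cls \<beta> L"
    using H_inf_extremal_in_H_inf[OF L] by blast
  obtain c N0 where c: "0 < c" and bound: "\<And>n k. N0 \<le> n \<Longrightarrow> 1 \<le> k \<Longrightarrow>
      c * (tail_sq ?th k + real k * ln (real n) / real n) \<le> (eps_n g ?th K n k)\<^sup>2"
    using eps_n_sq_two_sided[OF smooth_summable[OF b th] K] by metis
  have "0 < L * 2 powr (- (2 * \<beta> + 1))"
    using L by simp
  then have lower: "\<exists>c' N'. c' > 0 \<and> (\<forall>n \<ge> N'. ereal (c' * ((real n / ln (real n)) powr (- \<beta> / (2 * \<beta> + 1)))\<^sup>2)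
      \<le> eps_n0_sq g ?th K m (Lambda_n \<epsilon> n) n)" for \<epsilon>
    using rate_le_eps_n0_sq[OF c bound tail_sq_H_inf_extremal_ge[OF b L]] b by blast
  have upper: "\<exists>C N. C > 0 \<and> (\<forall>n \<ge> N. eps_n0_sq g ?th K m (Lambda_n \<epsilon> n) n
      \<le> ereal (C * ((real n / ln (real n)) powr (- \<beta> / (2 * \<beta> + 1)))\<^sup>2))" if "\<epsilon> > 0" for \<epsilon>
    using eps_n0_sq_le_rate_of_smooth[OF b L th that K m_slow] .
  have "\<exists>c C N. c > 0 \<and> C > 0 \<and> (\<forall>n \<ge> N.
      ereal (c * ((real n / ln (real n)) powr (- \<beta> / (2 * \<beta> + 1)))\<^sup>2) \<le> eps_n0_sq g ?th K m (Lambda_n \<epsilon> n) n \<and>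
      eps_n0_sq g ?th K m (Lambda_n \<epsilon> n) n \<le> ereal (C * ((real n / ln (real n)) powr (- \<beta> / (2 * \<beta> + 1)))\<^sup>2))"
    if \<epsilon>: "\<epsilon> > 0" for \<epsilon>
  proof -
    obtain c' N' where "c' > 0"
      "\<forall>n \<ge> N'. ereal (c' * ((real n / ln (real n)) powr (- \<beta> / (2 * \<beta> + 1)))\<^sup>2) \<le> eps_n0_sq g ?th K m (Lambda_n \<epsilon> n) n"
      using lower by blast
    moreover obtain C N where "C > 0"
      "\<forall>n \<ge> N. eps_n0_sq g ?th K m (Lambda_n \<epsilon> n) n \<le> ereal (C * ((real n / ln (real n)) powr (- \<beta> / (2 * \<beta> + 1)))\<^sup>2)"
      using upper[OF \<epsilon>] by blast
    ultimately show ?thesis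
      by (intro exI[of _ c'] exI[of _ C] exI[of _ "max N N'"]) auto
  qed
  then show ?thesis
    using th zero_less_one by blast
qed

end

theorem lemma3p1:
  fixes g :: "real \<Rightarrow> real" and K :: real and m :: "nat \<Rightarrow> real"
  assumes g_cont: "continuous_on UNIV g"
    and g_pos: "\<And>x. g x > 0"
    and g_dens: "integrable lborel g" "integral\<^sup>L lborel g = 1"
    and g_tail: "\<exists>s0 > 0. \<exists>p \<ge> 1. integrable lborel (\<lambda>x. exp (s0 * \<bar>x\<bar> powr p) * g x)"
    and K_pos: "K > 0"
    and m_inf: "filterlim m at_top sequentially"
    and m_slow: "\<And>\<delta>. \<delta> > 0 \<Longrightarrow> ((\<lambda>n. m n / real n powr \<delta>) \<longlongrightarrow> 0) sequentially"
  shows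
    "(\<forall>th0 \<in> l2seq. \<exists>\<epsilon>0 > 0. \<forall>\<epsilon>. 0 < \<epsilon> \<and> \<epsilon> \<le> \<epsilon>0 \<longrightarrow>
        (\<exists>c C N. c > 0 \<and> C > 0 \<and> (\<forall>n \<ge> N. \<forall>k \<in> Lambda_n \<epsilon> n.
            c * (tail_sq th0 k + real k * ln (real n) / real n) \<le> (eps_n g th0 K n k)\<^sup>2 \<and>
            (eps_n g th0 K n k)\<^sup>2 \<le> C * (tail_sq th0 k + real k * ln (real n) / real n)))
      \<and> (\<forall>\<beta> L. \<beta> > 0 \<and> L > 0 \<and> th0 \<in> H_inf \<beta> L \<union> S_cls \<beta> L \<longrightarrow>
          (\<exists>C N. C > 0 \<and> (\<forall>n \<ge> N.
            eps_n0_sq g th0 K m (Lambda_n \<epsilon> n) n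
              \<le> ereal (C * ((real n / ln (real n)) powr (- \<beta> / (2 * \<beta> + 1)))\<^sup>2)))))
   \<and> (\<forall>\<beta> L. \<beta> > 0 \<and> L > 0 \<longrightarrow>
        (\<exists>th0 \<in> H_inf \<beta> L \<union> S_cls \<beta> L. \<exists>\<epsilon>0 > 0. \<forall>\<epsilon>. 0 < \<epsilon> \<and> \<epsilon> \<le> \<epsilon>0 \<longrightarrow>
          (\<exists>c C N. c > 0 \<and> C > 0 \<and> (\<forall>n \<ge> N.
            ereal (c * ((real n / ln (real n)) powr (- \<beta> / (2 * \<beta> + 1)))\<^sup>2)
              \<le> eps_n0_sq g th0 K m (Lambda_n \<epsilon> n) n \<and>
            eps_n0_sq g th0 K m (Lambda_n \<epsilon> n) n
              \<le> ereal (C * ((real n / ln (real n)) powr (- \<beta> / (2 * \<beta> + 1)))\<^sup>2)))))"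
proof -
  interpret prior_density g
    using g_cont g_pos g_dens by unfold_locales
  show ?thesis
    using eps_n_rates[OF _ K_pos m_slow] eps_n0_sq_rate_attained[OF _ _ K_pos m_slow]
    by (auto simp: l2seq_def)
qed

end
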